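(* Let $V=\{1,\dots,N\}$, $V^{\mathrm{abs}}=\{0,N+1\}$, $V^*=V\cup V^{\mathrm{abs}}$, and let $\{\eta(t),t\ge0\}$ be a consistent configuration process on $V^*$ with generator $\mathcal L^{\mathrm{abs}}=\mathcal L+\mathcal H$. Let $\mathbf x=(x_1,\dots,x_n)\in(V^* )^n$. Then for all $m\in\{1,\dots,n-1\}$, $$\mathbb E_{\phi(\mathbf x)}\Big[\binom{\eta_0(\infty)}{m}\Big]=\sum_{1\le i_1<\dots<i_m\le n}\mathbb P_{\phi(x_{i_1},\dots,x_{i_m})}\big(\eta_0(\infty)=m\big).$$
   Context: Rates $r(i,j)\ge0$ for $i\in V$, $j\in\{0,N+1\}$. $\mathcal L$ generates a configuration process on $V$ (single-site space $\Lambda\subseteq\mathbb N_0$), acting only on $(\eta_i)_{i\in V}$; $\mathcal Hf(\eta)=\sum_{i\in V,j\in V^{\mathrm{abs}}}r(i,j)\eta_i[f(\eta-\delta_i+\delta_j)-f(\eta)]$. Consistency: $[\mathcal L^{\mathrm{abs}},\mathcal A]=0$, $\mathcal Af(\eta)=\sum_{x\in V^*}\eta_xf(\eta-\delta_x)$ (terms with $\eta_x=0$ vanish). $\phi(\mathbf y)=\sum_i\delta_{y_i}$. Quantities at time $\infty$ are limits as $t\to\infty$ of those at time $t$. *)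

theory Defs
  imports Complex_Main
begin

text \<open>Configurations on V* = {0,...,N+1}: functions nat => nat that vanish outside {0..N+1}.
  Bulk V = {1..N}, absorbing sites 0 and N+1.\<close>

type_synonym config = "nat \<Rightarrow> nat"

definition Vbulk :: "nat \<Rightarrow> nat set" where
  "Vbulk N = {1..N}"

definition Vabs :: "nat \<Rightarrow> nat set" where
  "Vabs N = {0, Suc N}"

definition Vstar :: "nat \<Rightarrow> nat set" where
  "Vstar N = {0..Suc N}"

definition Omega :: "nat \<Rightarrow> nat set \<Rightarrow> config set" where
  "Omega N Lam = {\<eta>. (\<forall>i. i \<notin> Vstar N \<longrightarrow> \<eta> i = 0) \<and> (\<forall>i\<in>Vbulk N. \<eta> i \<in> Lam)}"

definition BulkConf :: "nat \<Rightarrow> nat set \<Rightarrow> config set" where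
  "BulkConf N Lam = {\<zeta>. (\<forall>i. i \<notin> Vbulk N \<longrightarrow> \<zeta> i = 0) \<and> (\<forall>i\<in>Vbulk N. \<zeta> i \<in> Lam)}"

definition bulk :: "nat \<Rightarrow> config \<Rightarrow> config" where
  "bulk N \<eta> = (\<lambda>i. if i \<in> Vbulk N then \<eta> i else 0)"

definition glue :: "nat \<Rightarrow> config \<Rightarrow> config \<Rightarrow> config" where
  "glue N \<zeta> \<eta> = (\<lambda>i. if i \<in> Vbulk N then \<zeta> i else \<eta> i)"

definition Lgen :: "(config \<Rightarrow> config \<Rightarrow> real) \<Rightarrow> nat \<Rightarrow> (config \<Rightarrow> real) \<Rightarrow> config \<Rightarrow> real" where
  "Lgen c N f \<eta> = (\<Sum>\<zeta>\<in>{\<zeta>. c (bulk N \<eta>) \<zeta> \<noteq> 0}. c (bulk N \<eta>) \<zeta> * (f (glue N \<zeta> \<eta>) - f \<eta>))"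

definition Hgen :: "(nat \<Rightarrow> nat \<Rightarrow> real) \<Rightarrow> nat \<Rightarrow> (config \<Rightarrow> real) \<Rightarrow> config \<Rightarrow> real" where
  "Hgen r N f \<eta> = (\<Sum>i\<in>Vbulk N. \<Sum>j\<in>Vabs N.
      r i j * real (\<eta> i) * (f ((\<eta>(i := \<eta> i - 1))(j := (\<eta>(i := \<eta> i - 1)) j + 1)) - f \<eta>))"

definition Labs :: "(config \<Rightarrow> config \<Rightarrow> real) \<Rightarrow> (nat \<Rightarrow> nat \<Rightarrow> real) \<Rightarrow> nat
    \<Rightarrow> (config \<Rightarrow> real) \<Rightarrow> config \<Rightarrow> real" where
  "Labs c r N f \<eta> = Lgen c N f \<eta> + Hgen r N f \<eta>"

definition Aop :: "nat \<Rightarrow> (config \<Rightarrow> real) \<Rightarrow> config \<Rightarrow> real" where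
  "Aop N f \<eta> = (\<Sum>x\<in>Vstar N. real (\<eta> x) * f (\<eta>(x := \<eta> x - 1)))"

definition phi :: "nat list \<Rightarrow> config" where
  "phi xs = (\<lambda>i. count_list xs i)"

text \<open>Markov semigroup of the (finite-state, particle-conserving) process generated by Labs:
  E_eta[F(eta(t))] = (exp(t Labs) F)(eta).\<close>
definition Expect :: "(config \<Rightarrow> config \<Rightarrow> real) \<Rightarrow> (nat \<Rightarrow> nat \<Rightarrow> real) \<Rightarrow> nat
    \<Rightarrow> (config \<Rightarrow> real) \<Rightarrow> config \<Rightarrow> real \<Rightarrow> real" where
  "Expect c r N F \<eta> t = (\<Sum>k. t ^ k / fact k * ((Labs c r N) ^^ k) F \<eta>)"

definition Prob :: "(config \<Rightarrow> config \<Rightarrow> real) \<Rightarrow> (nat \<Rightarrow> nat \<Rightarrow> real) \<Rightarrow> nat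
    \<Rightarrow> (config \<Rightarrow> bool) \<Rightarrow> config \<Rightarrow> real \<Rightarrow> real" where
  "Prob c r N P \<eta> t = Expect c r N (\<lambda>\<xi>. if P \<xi> then 1 else 0) \<eta> t"

definition consistent_abs_process ::
    "nat \<Rightarrow> nat set \<Rightarrow> (config \<Rightarrow> config \<Rightarrow> real) \<Rightarrow> (nat \<Rightarrow> nat \<Rightarrow> real) \<Rightarrow> bool" where
  "consistent_abs_process N Lam c r \<longleftrightarrow>
     0 \<in> Lam \<and> (\<forall>a\<in>Lam. \<forall>b\<le>a. b \<in> Lam) \<and>
     (\<forall>\<zeta> \<zeta>'. c \<zeta> \<zeta>' \<ge> 0) \<and>
     (\<forall>\<zeta>. finite {\<zeta>'. c \<zeta> \<zeta>' \<noteq> 0}) \<and>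
     (\<forall>\<zeta> \<zeta>'. c \<zeta> \<zeta>' \<noteq> 0 \<longrightarrow> \<zeta> \<in> BulkConf N Lam \<and> \<zeta>' \<in> BulkConf N Lam) \<and>
     (\<forall>i j. r i j \<ge> 0) \<and>
     (\<forall>f \<eta>. \<eta> \<in> Omega N Lam \<longrightarrow> Labs c r N (Aop N f) \<eta> = Aop N (Labs c r N f) \<eta>)"

end

theory Submission
  imports Defs
begin

text \<open>Consistency \<open>[L\<^sup>a\<^sup>b\<^sup>s, A] = 0\<close>, applied to the constant \<open>1\<close> and to the particle number \<open>T\<close>,
  gives \<open>L T = 0\<close> and \<open>L (T (T - 1)) = 0\<close>; hence \<open>L (T - T \<xi>)\<^sup>2\<close> vanishes at \<open>\<xi>\<close>, which forces
  every jump to preserve \<open>T\<close>. So the process lives on the finite levels \<open>{T = K}\<close>, where the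
  semigroup \<open>exp (t L\<^sup>a\<^sup>b\<^sup>s)\<close> is a convergent power series, is positive (by uniformization) and
  commutes with \<open>A\<close>.

  On a configuration with \<open>n\<close> particles, \<open>A\<^sup>n\<^sup>-\<^sup>m\<close> maps the indicator of \<open>{\<eta>\<^sub>0 = m}\<close> to
  \<open>(n - m)! (\<eta>\<^sub>0 choose m)\<close>, while \<open>A\<^sup>n\<^sup>-\<^sup>m\<close> evaluated at \<open>\<phi>(x)\<close> is \<open>(n - m)!\<close> times the sum
  over the \<open>m\<close>-element subconfigurations \<open>\<phi>(x\<^sub>I)\<close>. Commuting \<open>A\<^sup>n\<^sup>-\<^sup>m\<close> with the semigroup yields
  the identity at every finite time. Finally, with \<open>m\<close> particles in total the event \<open>{\<eta>\<^sub>0 = m}\<close>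
  is absorbing, so each probability on the right is nondecreasing in \<open>t\<close> and bounded by \<open>1\<close>,
  hence converges, and the limit can be taken termwise.\<close>

section \<open>Particle number and levels\<close>

definition num_particles :: "nat \<Rightarrow> config \<Rightarrow> nat" where
  "num_particles N \<xi> = (\<Sum>x\<in>Vstar N. \<xi> x)"

definition level :: "nat \<Rightarrow> nat set \<Rightarrow> nat \<Rightarrow> config set" where
  "level N Lam K = {\<xi> \<in> Omega N Lam. num_particles N \<xi> = K}"

definition move_particle :: "config \<Rightarrow> nat \<Rightarrow> nat \<Rightarrow> config" where
  "move_particle \<xi> i j = (\<xi>(i := \<xi> i - 1))(j := (\<xi>(i := \<xi> i - 1)) j + 1)"

lemma finite_Vstar [simp]: "finite (Vstar N)"
  by (simp add: Vstar_def)

lemma Vbulk_subset_Vstar: "Vbulk N \<subseteq> Vstar N"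
  and Vabs_subset_Vstar: "Vabs N \<subseteq> Vstar N"
  by (auto simp: Vbulk_def Vabs_def Vstar_def)

lemma le_num_particles: "x \<in> Vstar N \<Longrightarrow> \<xi> x \<le> num_particles N \<xi>"
  unfolding num_particles_def by (rule member_le_sum) auto

lemma num_particles_fun_upd:
  assumes "x \<in> Vstar N"
  shows "num_particles N (\<xi>(x := v)) + \<xi> x = num_particles N \<xi> + v"
proof -
  have "num_particles N (\<xi>(x := v)) = v + (\<Sum>y\<in>Vstar N - {x}. \<xi> y)"
    unfolding num_particles_def using assms by (simp add: sum.remove)
  moreover have "num_particles N \<xi> = \<xi> x + (\<Sum>y\<in>Vstar N - {x}. \<xi> y)"
    unfolding num_particles_def using assms by (simp add: sum.remove)
  ultimately show ?thesis by simp
qed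

lemma num_particles_remove:
  "x \<in> Vstar N \<Longrightarrow> 0 < \<xi> x \<Longrightarrow> num_particles N (\<xi>(x := \<xi> x - 1)) = num_particles N \<xi> - 1"
  using num_particles_fun_upd[of x N \<xi> "\<xi> x - 1"] by simp

lemma num_particles_move_particle:
  assumes "i \<in> Vstar N" "j \<in> Vstar N" "0 < \<xi> i"
  shows "num_particles N (move_particle \<xi> i j) = num_particles N \<xi>"
  using num_particles_fun_upd[OF assms(2), of "\<xi>(i := \<xi> i - 1)" "(\<xi>(i := \<xi> i - 1)) j + 1"]
    num_particles_fun_upd[OF assms(1), of \<xi> "\<xi> i - 1"] assms(3)
  unfolding move_particle_def by simp

lemma finite_level: "finite (level N Lam K)"
proof (rule finite_subset)
  show "level N Lam K \<subseteq> {f. \<forall>x. (x \<in> Vstar N \<longrightarrow> f x \<in> {..K}) \<and> (x \<notin> Vstar N \<longrightarrow> f x = 0)}"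
    using le_num_particles by (fastforce simp: level_def Omega_def)
  show "finite {f. \<forall>x. (x \<in> Vstar N \<longrightarrow> f x \<in> {..K}) \<and> (x \<notin> Vstar N \<longrightarrow> f x = (0::nat))}"
    by (rule finite_set_of_finite_funs) auto
qed

lemma phi_nths_apply: "phi (nths xs I) x = card {i \<in> I. i < length xs \<and> xs ! i = x}"
proof -
  have "count_list (nths xs I) x = length (filter (\<lambda>p. x = fst p \<and> snd p \<in> I) (zip xs [0..<length xs]))"
    unfolding count_list_eq_length_filter nths_def
    by (simp add: filter_map filter_filter comp_def conj_commute)
  also have "\<dots> = card {i \<in> I. i < length xs \<and> xs ! i = x}"
    unfolding length_filter_conv_card by (intro arg_cong[where f = card]) (auto simp: nth_zip)
  finally show ?thesis unfolding phi_def .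
qed

lemma phi_nths_Diff_singleton:
  assumes "j \<in> J" "j < length xs"
  shows "phi (nths xs (J - {j})) = (phi (nths xs J))(xs ! j := phi (nths xs J) (xs ! j) - 1)"
proof
  fix y
  have "{i \<in> J - {j}. i < length xs \<and> xs ! i = y} =
      {i \<in> J. i < length xs \<and> xs ! i = y} - (if y = xs ! j then {j} else {})"
    by auto
  then show "phi (nths xs (J - {j})) y = ((phi (nths xs J))(xs ! j := phi (nths xs J) (xs ! j) - 1)) y"
    using assms by (simp add: phi_nths_apply card_Diff_singleton)
qed

lemma num_particles_phi: "set xs \<subseteq> Vstar N \<Longrightarrow> num_particles N (phi xs) = length xs"
  unfolding num_particles_def phi_def by (rule sum_count_set) simp_all

lemma phi_in_Omega_imp_subset: "phi xs \<in> Omega N Lam \<Longrightarrow> set xs \<subseteq> Vstar N"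
  by (force simp: Omega_def phi_def count_list_0_iff)

lemma ex_list_phi_eq:
  assumes "\<xi> \<in> Omega N Lam"
  obtains ys where "phi ys = \<xi>" "set ys \<subseteq> Vstar N" "length ys = num_particles N \<xi>"
proof
  define ys where "ys = concat (map (\<lambda>x. replicate (\<xi> x) x) [0..<Suc (Suc N)])"
  have count_replicate: "count_list (replicate k x) y = (if x = y then k else 0)" for k x y
    by (induction k) auto
  have "count_list (concat (map (\<lambda>x. replicate (\<xi> x) x) [0..<M])) y = (if y < M then \<xi> y else 0)"
    for M y by (induction M) (auto simp: count_replicate less_Suc_eq)
  then have count_ys: "count_list ys y = (if y < Suc (Suc N) then \<xi> y else 0)" for y
    unfolding ys_def .
  show "phi ys = \<xi>"
    using assms by (auto simp: phi_def count_ys Omega_def Vstar_def)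
  show "set ys \<subseteq> Vstar N" unfolding ys_def by (auto simp: Vstar_def)
  then show "length ys = num_particles N \<xi>"
    using num_particles_phi \<open>phi ys = \<xi>\<close> by metis
qed

lemma glue_in_Omega: "\<zeta> \<in> BulkConf N Lam \<Longrightarrow> \<xi> \<in> Omega N Lam \<Longrightarrow> glue N \<zeta> \<xi> \<in> Omega N Lam"
  by (auto simp: glue_def Omega_def BulkConf_def Vstar_def Vbulk_def)

section \<open>Annihilation on subconfigurations\<close>

lemma sum_subsets_card_Suc_remove:
  fixes h :: "'a set \<Rightarrow> 'b::comm_semiring_1"
  assumes "finite J"
  shows "(\<Sum>I | I \<subseteq> J \<and> card I = Suc s. \<Sum>i\<in>I. h (I - {i}))
       = of_nat (card J - s) * (\<Sum>I | I \<subseteq> J \<and> card I = s. h I)"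
proof -
  let ?S1 = "{I. I \<subseteq> J \<and> card I = Suc s}" and ?S0 = "{I. I \<subseteq> J \<and> card I = s}"
  have fin: "finite ?S1" "finite ?S0" "\<And>I. I \<subseteq> J \<Longrightarrow> finite I"
    using assms by (auto intro: finite_subset[of _ "Pow J"] finite_subset)
  have "(\<Sum>I\<in>?S1. \<Sum>i\<in>I. h (I - {i})) = (\<Sum>(I, i)\<in>Sigma ?S1 (\<lambda>I. I). h (I - {i}))"
    using fin by (intro sum.Sigma) auto
  also have "\<dots> = (\<Sum>(I, i)\<in>Sigma ?S0 (\<lambda>I. J - I). h I)"
    by (rule sum.reindex_bij_witness[where j = "\<lambda>(I, i). (I - {i}, i)" and i = "\<lambda>(I, i). (insert i I, i)"])
      (use fin in \<open>auto simp: card_insert_if\<close>)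
  also have "\<dots> = (\<Sum>I\<in>?S0. of_nat (card J - s) * h I)"
    using fin by (subst sum.Sigma[symmetric]) (auto simp: card_Diff_subset)
  finally show ?thesis by (simp add: sum_distrib_left)
qed

lemma Aop_phi_nths:
  assumes "set xs \<subseteq> Vstar N" "J \<subseteq> {..<length xs}"
  shows "Aop N h (phi (nths xs J)) = (\<Sum>j\<in>J. h (phi (nths xs (J - {j}))))"
proof -
  let ?\<xi> = "phi (nths xs J)"
  have "(\<Sum>j\<in>J. h (phi (nths xs (J - {j})))) = (\<Sum>j\<in>J. h (?\<xi>(xs ! j := ?\<xi> (xs ! j) - 1)))"
    using assms(2) by (intro sum.cong) (auto simp: phi_nths_Diff_singleton)
  also have "\<dots> = (\<Sum>x\<in>Vstar N. \<Sum>j | j \<in> J \<and> xs ! j = x. h (?\<xi>(xs ! j := ?\<xi> (xs ! j) - 1)))"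
    using assms by (intro sum.group[symmetric]) (auto intro: finite_subset dest: nth_mem)
  also have "\<dots> = (\<Sum>x\<in>Vstar N. real (?\<xi> x) * h (?\<xi>(x := ?\<xi> x - 1)))"
  proof (rule sum.cong)
    fix x
    have "{j. j \<in> J \<and> xs ! j = x} = {i \<in> J. i < length xs \<and> xs ! i = x}" using assms(2) by auto
    then show "(\<Sum>j | j \<in> J \<and> xs ! j = x. h (?\<xi>(xs ! j := ?\<xi> (xs ! j) - 1)))
        = real (?\<xi> x) * h (?\<xi>(x := ?\<xi> x - 1))"
      by (simp add: phi_nths_apply)
  qed simp
  finally show ?thesis unfolding Aop_def by simp
qed

lemma funpow_Aop_phi_nths:
  assumes "set xs \<subseteq> Vstar N" "J \<subseteq> {..<length xs}" "k \<le> card J"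
  shows "(Aop N ^^ k) h (phi (nths xs J))
       = fact k * (\<Sum>I | I \<subseteq> J \<and> card I = card J - k. h (phi (nths xs I)))"
  using assms(3)
proof (induction k arbitrary: h)
  case 0
  have "finite J" using assms(2) finite_subset by blast
  then have "{I. I \<subseteq> J \<and> card I = card J} = {J}" using card_subset_eq by blast
  then show ?case by simp
next
  case (Suc k)
  have fin: "finite J" using assms(2) finite_subset by blast
  define s where "s = card J - Suc k"
  have s: "card J - k = Suc s" "card J - s = Suc k" using Suc.prems unfolding s_def by simp_all
  have "(Aop N ^^ Suc k) h (phi (nths xs J)) = (Aop N ^^ k) (Aop N h) (phi (nths xs J))"
    by (simp add: funpow_Suc_right del: funpow.simps)
  also have "\<dots> = fact k * (\<Sum>I | I \<subseteq> J \<and> card I = Suc s. Aop N h (phi (nths xs I)))"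
    using Suc by (simp add: s)
  also have "\<dots> = fact k * (\<Sum>I | I \<subseteq> J \<and> card I = Suc s. \<Sum>i\<in>I. h (phi (nths xs (I - {i}))))"
    using assms(1,2) by (intro arg_cong[where f = "(*) (fact k)"] sum.cong refl Aop_phi_nths) auto
  also have "\<dots> = fact (Suc k) * (\<Sum>I | I \<subseteq> J \<and> card I = s. h (phi (nths xs I)))"
    using sum_subsets_card_Suc_remove[OF fin, where s = s and h = "\<lambda>I. h (phi (nths xs I))"] by (simp add: s)
  finally show ?case by (simp add: s_def)
qed

text \<open>The \<open>m\<close>-element subsets of the particles that all sit at the site \<open>0\<close> are counted by
  \<open>\<xi> 0 choose m\<close>.\<close>
lemma funpow_Aop_indicator_eq_binomial:
  assumes "\<xi> \<in> Omega N Lam" "num_particles N \<xi> = n" "m \<le> n"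
  shows "(Aop N ^^ (n - m)) (\<lambda>\<zeta>. if \<zeta> 0 = m then 1 else 0) \<xi> = fact (n - m) * real (\<xi> 0 choose m)"
proof -
  obtain ys where ys: "phi ys = \<xi>" "set ys \<subseteq> Vstar N" "length ys = n"
    using ex_list_phi_eq[OF assms(1)] assms(2) by metis
  define Z where "Z = {i. i < n \<and> ys ! i = 0}"
  have \<xi>: "\<xi> = phi (nths ys {..<n})" using ys by (simp add: nths_all)
  have zero_count: "phi (nths ys I) 0 = m \<longleftrightarrow> I \<subseteq> Z" if "I \<subseteq> {..<n}" "card I = m" for I
  proof -
    have "phi (nths ys I) 0 = card (I \<inter> Z)"
      using that(1) ys(3) unfolding phi_nths_apply Z_def by (intro arg_cong[where f = card]) auto
    moreover have "finite I" using that(1) finite_subset by blast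
    ultimately show ?thesis
      using that(2) card_subset_eq[of I "I \<inter> Z"] by (metis Int_lower1 inf.absorb_iff1)
  qed
  have "(Aop N ^^ (n - m)) (\<lambda>\<zeta>. if \<zeta> 0 = m then 1 else 0) \<xi>
      = fact (n - m) * (\<Sum>I | I \<subseteq> {..<n} \<and> card I = m. if phi (nths ys I) 0 = m then 1 else 0)"
    unfolding \<xi> using funpow_Aop_phi_nths[OF ys(2), of "{..<n}" "n - m"] ys(3) assms(3) by simp
  also have "(\<Sum>I | I \<subseteq> {..<n} \<and> card I = m. if phi (nths ys I) 0 = m then 1 else 0)
      = real (card {I. I \<subseteq> Z \<and> card I = m})"
    using zero_count by (simp add: sum.If_cases Z_def) (intro arg_cong[where f = card], auto)
  also have "card {I. I \<subseteq> Z \<and> card I = m} = card Z choose m"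
    by (simp add: Z_def n_subsets)
  also have "card Z = \<xi> 0"
    unfolding \<xi> phi_nths_apply Z_def using ys(3) by (intro arg_cong[where f = card]) auto
  finally show ?thesis .
qed

lemma Aop_one: "Aop N (\<lambda>_. 1) = (\<lambda>\<xi>. real (num_particles N \<xi>))"
  by (simp add: Aop_def num_particles_def fun_eq_iff)

lemma Aop_num_particles:
  "Aop N (\<lambda>\<zeta>. real (num_particles N \<zeta>)) = (\<lambda>\<xi>. real (num_particles N \<xi>) * (real (num_particles N \<xi>) - 1))"
proof
  fix \<xi>
  have "Aop N (\<lambda>\<zeta>. real (num_particles N \<zeta>)) \<xi>
      = (\<Sum>x\<in>Vstar N. real (\<xi> x) * (real (num_particles N \<xi>) - 1))"
    unfolding Aop_def
  proof (intro sum.cong refl)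
    fix x assume "x \<in> Vstar N"
    then show "real (\<xi> x) * real (num_particles N (\<xi>(x := \<xi> x - 1)))
        = real (\<xi> x) * (real (num_particles N \<xi>) - 1)"
      using le_num_particles[of x N \<xi>] num_particles_remove[of x N \<xi>]
      by (cases "\<xi> x = 0") (simp_all add: of_nat_diff)
  qed
  then show "Aop N (\<lambda>\<zeta>. real (num_particles N \<zeta>)) \<xi>
      = real (num_particles N \<xi>) * (real (num_particles N \<xi>) - 1)"
    by (simp add: sum_distrib_right[symmetric] num_particles_def)
qed

section \<open>Power series and monotone limits\<close>

lemma summable_exp_series_if_geometric_bound:
  fixes a :: "nat \<Rightarrow> real"
  assumes "\<And>k. \<bar>a k\<bar> \<le> M ^ k * B"
  shows "summable (\<lambda>k. t ^ k / fact k * a k)"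
proof (rule summable_comparison_test)
  have "\<bar>t ^ k / fact k * a k\<bar> \<le> B * (inverse (fact k) * (\<bar>t\<bar> * M) ^ k)" for k
  proof -
    have "\<bar>t ^ k / fact k * a k\<bar> = \<bar>t\<bar> ^ k / fact k * \<bar>a k\<bar>" by (simp add: abs_mult power_abs)
    also have "\<dots> \<le> \<bar>t\<bar> ^ k / fact k * (M ^ k * B)" by (rule mult_left_mono[OF assms]) simp
    finally show ?thesis by (simp add: power_mult_distrib field_simps)
  qed
  then show "\<exists>K. \<forall>k\<ge>K. norm (t ^ k / fact k * a k) \<le> B * (inverse (fact k) * (\<bar>t\<bar> * M) ^ k)"
    by simp
  show "summable (\<lambda>k. B * (inverse (fact k) * (\<bar>t\<bar> * M) ^ k))"
    by (rule summable_mult[OF summable_exp])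
qed

text \<open>The Pascal step in the expansion of \<open>L\<^sup>k = (P - \<lambda>)\<^sup>k\<close>, with \<open>x = -\<lambda>\<close> and
  \<open>p j = P\<^sup>j F\<close>.\<close>
lemma binomial_sum_Suc:
  fixes x :: "'a::comm_semiring_1" and p :: "nat \<Rightarrow> 'a"
  shows "(\<Sum>j\<le>k. of_nat (k choose j) * x ^ (k - j) * (p (Suc j) + x * p j))
       = (\<Sum>j\<le>Suc k. of_nat (Suc k choose j) * x ^ (Suc k - j) * p j)"
proof -
  have "(\<Sum>j\<le>k. of_nat (k choose j) * x ^ (k - j) * (x * p j))
      = (\<Sum>j\<le>Suc k. of_nat (k choose j) * x ^ (Suc k - j) * p j)"
    by (simp add: Suc_diff_le algebra_simps binomial_eq_0)
  also have "\<dots> = x ^ Suc k * p 0 + (\<Sum>j\<le>k. of_nat (k choose Suc j) * x ^ (k - j) * p (Suc j))"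
    by (subst sum.atMost_Suc_shift) simp
  finally have shifted: "(\<Sum>j\<le>k. of_nat (k choose j) * x ^ (k - j) * (x * p j))
      = x ^ Suc k * p 0 + (\<Sum>j\<le>k. of_nat (k choose Suc j) * x ^ (k - j) * p (Suc j))" .
  have "(\<Sum>j\<le>Suc k. of_nat (Suc k choose j) * x ^ (Suc k - j) * p j)
      = x ^ Suc k * p 0 + (\<Sum>j\<le>k. of_nat (Suc k choose Suc j) * x ^ (k - j) * p (Suc j))"
    by (subst sum.atMost_Suc_shift) simp
  also have "\<dots> = x ^ Suc k * p 0 + (\<Sum>j\<le>k. of_nat (k choose j) * x ^ (k - j) * p (Suc j))
      + (\<Sum>j\<le>k. of_nat (k choose Suc j) * x ^ (k - j) * p (Suc j))"
    by (simp add: sum.distrib algebra_simps)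
  finally show ?thesis using shifted by (simp add: distrib_left sum.distrib ac_simps)
qed

lemma tendsto_SUP_at_top_if_mono_bounded:
  fixes u :: "real \<Rightarrow> real"
  assumes mono: "\<And>a b. 0 \<le> a \<Longrightarrow> a \<le> b \<Longrightarrow> u a \<le> u b"
    and bounded: "\<And>t. 0 \<le> t \<Longrightarrow> u t \<le> B"
  shows "(u \<longlongrightarrow> (SUP t\<in>{0..}. u t)) at_top"
proof -
  define l where "l = (SUP t\<in>{0..}. u t)"
  have bdd: "bdd_above (u ` {0..})" using bounded by (auto intro!: bdd_aboveI[of _ B])
  show ?thesis
    unfolding l_def[symmetric]
  proof (rule increasing_tendsto)
    show "eventually (\<lambda>t. u t \<le> l) at_top"
      using eventually_ge_at_top[of 0] by eventually_elim (auto simp: l_def intro!: cSUP_upper bdd)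
  next
    fix a assume "a < l"
    then obtain t0 where t0: "0 \<le> t0" "a < u t0"
      unfolding l_def using less_cSUP_iff[OF _ bdd] by auto
    show "eventually (\<lambda>t. a < u t) at_top"
      using eventually_ge_at_top[of t0] by eventually_elim (use t0 mono in force)
  qed
qed

section \<open>The generator\<close>

lemma Labs_linear: "Labs c r N (\<lambda>\<zeta>. a * f \<zeta> + g \<zeta>) \<xi> = a * Labs c r N f \<xi> + Labs c r N g \<xi>"
proof -
  have distrib: "\<And>x u v w z. x * ((a * u + v) - (a * w + z)) = a * (x * (u - w)) + x * (v - z)"
    by (simp add: algebra_simps)
  show ?thesis
    unfolding Labs_def Lgen_def Hgen_def distrib sum.distrib sum_distrib_left[symmetric]
    by (simp add: distrib_left)
qed

lemma Hgen_move_particle: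
  "Hgen r N f \<xi> = (\<Sum>i\<in>Vbulk N. \<Sum>j\<in>Vabs N. r i j * real (\<xi> i) * (f (move_particle \<xi> i j) - f \<xi>))"
  unfolding Hgen_def move_particle_def ..

lemma Labs_const: "Labs c r N (\<lambda>_. d) \<xi> = 0"
  unfolding Labs_def Lgen_def Hgen_def by simp

lemma Labs_cmult: "Labs c r N (\<lambda>\<zeta>. a * f \<zeta>) \<xi> = a * Labs c r N f \<xi>"
  using Labs_linear[of c r N a f "\<lambda>_. 0" \<xi>] Labs_const by simp

lemma Labs_add: "Labs c r N (\<lambda>\<zeta>. f \<zeta> + g \<zeta>) \<xi> = Labs c r N f \<xi> + Labs c r N g \<xi>"
  using Labs_linear[of c r N 1 f g \<xi>] by simp

lemma Labs_sum:
  "finite J \<Longrightarrow> Labs c r N (\<lambda>\<zeta>. \<Sum>j\<in>J. h j \<zeta>) \<xi> = (\<Sum>j\<in>J. Labs c r N (h j) \<xi>)"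
  by (induction J rule: finite_induct) (simp_all add: Labs_const Labs_add)

lemma funpow_Labs_linear:
  "(Labs c r N ^^ k) (\<lambda>\<zeta>. a * f \<zeta> + g \<zeta>) = (\<lambda>\<zeta>. a * (Labs c r N ^^ k) f \<zeta> + (Labs c r N ^^ k) g \<zeta>)"
  by (induction k) (simp_all add: Labs_linear)

lemma funpow_Labs_const: "(Labs c r N ^^ k) (\<lambda>_. d) = (\<lambda>_. if k = 0 then d else 0)"
  by (induction k) (simp_all add: Labs_const)

lemma Expect_const: "Expect c r N (\<lambda>_. d) \<xi> t = d"
proof -
  have "(\<lambda>k. t ^ k / fact k * (Labs c r N ^^ k) (\<lambda>_. d) \<xi>) = (\<lambda>k. if k = 0 then d else 0)"
    by (auto simp: funpow_Labs_const)
  then show ?thesis unfolding Expect_def using sums_unique[OF sums_single[of 0 "\<lambda>_. d"]] by simp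
qed

locale consistent_process =
  fixes N :: nat and Lam :: "nat set" and c :: "config \<Rightarrow> config \<Rightarrow> real"
    and r :: "nat \<Rightarrow> nat \<Rightarrow> real"
  assumes consistent: "consistent_abs_process N Lam c r"
begin

abbreviation L :: "(config \<Rightarrow> real) \<Rightarrow> config \<Rightarrow> real" where "L \<equiv> Labs c r N"
abbreviation A :: "(config \<Rightarrow> real) \<Rightarrow> config \<Rightarrow> real" where "A \<equiv> Aop N"
abbreviation E :: "(config \<Rightarrow> real) \<Rightarrow> config \<Rightarrow> real \<Rightarrow> real" where "E \<equiv> Expect c r N"
abbreviation \<Omega> :: "config set" where "\<Omega> \<equiv> Omega N Lam"
abbreviation lvl :: "nat \<Rightarrow> config set" where "lvl \<equiv> level N Lam"

lemma Lam_downward_closed: "a \<in> Lam \<Longrightarrow> b \<le> a \<Longrightarrow> b \<in> Lam"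
  and bulk_rate_nonneg: "0 \<le> c \<zeta> \<zeta>'"
  and finite_bulk_transitions: "finite {\<zeta>'. c \<zeta> \<zeta>' \<noteq> 0}"
  and bulk_transition_BulkConf: "c \<zeta> \<zeta>' \<noteq> 0 \<Longrightarrow> \<zeta>' \<in> BulkConf N Lam"
  and boundary_rate_nonneg: "0 \<le> r i j"
  and Labs_Aop_commute: "\<xi> \<in> \<Omega> \<Longrightarrow> L (A f) \<xi> = A (L f) \<xi>"
  using consistent unfolding consistent_abs_process_def by blast+

lemma remove_particle_in_Omega: "\<xi> \<in> \<Omega> \<Longrightarrow> \<xi>(x := \<xi> x - 1) \<in> \<Omega>"
  unfolding Omega_def using Lam_downward_closed by auto

lemma move_particle_in_Omega:
  "\<xi> \<in> \<Omega> \<Longrightarrow> i \<in> Vbulk N \<Longrightarrow> j \<in> Vabs N \<Longrightarrow> move_particle \<xi> i j \<in> \<Omega>"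
  unfolding Omega_def move_particle_def
  using Lam_downward_closed by (auto simp: Vabs_def Vbulk_def Vstar_def)

lemma Labs_num_particles: "\<xi> \<in> \<Omega> \<Longrightarrow> L (\<lambda>\<zeta>. real (num_particles N \<zeta>)) \<xi> = 0"
  using Labs_Aop_commute[of \<xi> "\<lambda>_. 1"] by (simp add: Aop_one Aop_def Labs_const)

lemma Labs_num_particles_falling:
  assumes "\<xi> \<in> \<Omega>"
  shows "L (\<lambda>\<zeta>. real (num_particles N \<zeta>) * (real (num_particles N \<zeta>) - 1)) \<xi> = 0"
proof -
  have "A (L (\<lambda>\<zeta>. real (num_particles N \<zeta>))) \<xi> = 0"
    unfolding Aop_def using Labs_num_particles[OF remove_particle_in_Omega[OF assms]] by simp
  then show ?thesis
    using Labs_Aop_commute[OF assms, of "\<lambda>\<zeta>. real (num_particles N \<zeta>)"] by (simp add: Aop_num_particles)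
qed

lemma Labs_num_particles_variance:
  assumes "\<xi> \<in> \<Omega>"
  shows "L (\<lambda>\<zeta>. (real (num_particles N \<zeta>) - real (num_particles N \<xi>))\<^sup>2) \<xi> = 0"
proof -
  let ?n = "\<lambda>\<zeta>. real (num_particles N \<zeta>)"
  have expand: "(\<lambda>\<zeta>. (?n \<zeta> - ?n \<xi>)\<^sup>2)
      = (\<lambda>\<zeta>. ?n \<zeta> * (?n \<zeta> - 1) + ((1 - 2 * ?n \<xi>) * ?n \<zeta> + ?n \<xi> ^ 2))"
    by (simp add: power2_eq_square algebra_simps)
  show ?thesis
    unfolding expand Labs_add Labs_linear Labs_const
    using Labs_num_particles[OF assms] Labs_num_particles_falling[OF assms] by (simp add: Labs_cmult)
qed

text \<open>\<open>L\<close> applied to a nonnegative function vanishing at \<open>\<xi>\<close> is a sum of nonnegative jump terms;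
  for the squared deviation of the particle number it is zero, so no bulk jump changes the particle number.\<close>
lemma num_particles_glue:
  assumes "\<xi> \<in> \<Omega>" "c (bulk N \<xi>) \<zeta> \<noteq> 0"
  shows "num_particles N (glue N \<zeta> \<xi>) = num_particles N \<xi>"
proof -
  let ?h = "\<lambda>\<zeta>. (real (num_particles N \<zeta>) - real (num_particles N \<xi>))\<^sup>2"
  let ?S = "{\<zeta>. c (bulk N \<xi>) \<zeta> \<noteq> 0}"
  have Lgen_eq: "Lgen c N ?h \<xi> = (\<Sum>\<zeta>\<in>?S. c (bulk N \<xi>) \<zeta> * ?h (glue N \<zeta> \<xi>))"
    unfolding Lgen_def by simp
  have "Hgen r N ?h \<xi> \<ge> 0"
    unfolding Hgen_def by (intro sum_nonneg) (simp add: boundary_rate_nonneg)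
  moreover have "Lgen c N ?h \<xi> \<ge> 0"
    unfolding Lgen_eq by (intro sum_nonneg) (simp add: bulk_rate_nonneg)
  ultimately have "Lgen c N ?h \<xi> = 0"
    using Labs_num_particles_variance[OF assms(1)] unfolding Labs_def by linarith
  then have "\<forall>\<zeta>'\<in>?S. c (bulk N \<xi>) \<zeta>' * ?h (glue N \<zeta>' \<xi>) = 0"
    unfolding Lgen_eq by (subst (asm) sum_nonneg_eq_0_iff) (auto simp: finite_bulk_transitions bulk_rate_nonneg)
  then show ?thesis using assms(2) by simp
qed

lemma glue_in_level: "\<xi> \<in> lvl K \<Longrightarrow> c (bulk N \<xi>) \<zeta> \<noteq> 0 \<Longrightarrow> glue N \<zeta> \<xi> \<in> lvl K"
  using num_particles_glue glue_in_Omega bulk_transition_BulkConf unfolding level_def by auto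

lemma move_particle_in_level:
  "\<xi> \<in> lvl K \<Longrightarrow> i \<in> Vbulk N \<Longrightarrow> j \<in> Vabs N \<Longrightarrow> 0 < \<xi> i \<Longrightarrow> move_particle \<xi> i j \<in> lvl K"
  using move_particle_in_Omega num_particles_move_particle Vbulk_subset_Vstar Vabs_subset_Vstar
  unfolding level_def by blast

lemma in_level_num_particles: "\<xi> \<in> \<Omega> \<Longrightarrow> \<xi> \<in> lvl (num_particles N \<xi>)"
  by (simp add: level_def)

lemma Labs_cong_level:
  assumes "\<xi> \<in> lvl K" "\<And>\<zeta>. \<zeta> \<in> lvl K \<Longrightarrow> f \<zeta> = g \<zeta>"
  shows "L f \<xi> = L g \<xi>"
  unfolding Labs_def Lgen_def Hgen_move_particle
proof (intro arg_cong2[where f = "(+)"] sum.cong refl)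
  fix \<zeta> assume "\<zeta> \<in> {\<zeta>. c (bulk N \<xi>) \<zeta> \<noteq> 0}"
  then show "c (bulk N \<xi>) \<zeta> * (f (glue N \<zeta> \<xi>) - f \<xi>) = c (bulk N \<xi>) \<zeta> * (g (glue N \<zeta> \<xi>) - g \<xi>)"
    using assms glue_in_level by auto
next
  fix i j assume "i \<in> Vbulk N" "j \<in> Vabs N"
  then show "r i j * real (\<xi> i) * (f (move_particle \<xi> i j) - f \<xi>)
      = r i j * real (\<xi> i) * (g (move_particle \<xi> i j) - g \<xi>)"
    using assms move_particle_in_level[of \<xi> K i j] by (cases "\<xi> i = 0") auto
qed

lemma funpow_Labs_cong_level:
  assumes "\<xi> \<in> lvl K" "\<And>\<zeta>. \<zeta> \<in> lvl K \<Longrightarrow> f \<zeta> = g \<zeta>"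
  shows "(L ^^ k) f \<xi> = (L ^^ k) g \<xi>"
  using assms(1)
proof (induction k arbitrary: \<xi>)
  case (Suc k)
  have "L ((L ^^ k) f) \<xi> = L ((L ^^ k) g) \<xi>"
    by (rule Labs_cong_level[OF Suc.prems Suc.IH])
  then show ?case by simp
qed (simp add: assms(2))

section \<open>The semigroup on a level\<close>

definition exit_rate :: "config \<Rightarrow> real" where
  "exit_rate \<xi> = (\<Sum>\<zeta> | c (bulk N \<xi>) \<zeta> \<noteq> 0. c (bulk N \<xi>) \<zeta>)
     + (\<Sum>i\<in>Vbulk N. \<Sum>j\<in>Vabs N. r i j * real (\<xi> i))"

text \<open>Any bound for \<open>exit_rate\<close> on the finite level \<open>K\<close> would do; the sum is the simplest one.\<close>
definition rate_bound :: "nat \<Rightarrow> real" where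
  "rate_bound K = (\<Sum>\<xi>\<in>lvl K. exit_rate \<xi>)"

lemma exit_rate_nonneg: "0 \<le> exit_rate \<xi>"
  unfolding exit_rate_def
  by (intro add_nonneg_nonneg sum_nonneg) (auto simp: bulk_rate_nonneg boundary_rate_nonneg)

lemma exit_rate_le_rate_bound: "\<xi> \<in> lvl K \<Longrightarrow> exit_rate \<xi> \<le> rate_bound K"
  unfolding rate_bound_def by (rule member_le_sum) (auto simp: finite_level exit_rate_nonneg)

lemma rate_bound_nonneg: "0 \<le> rate_bound K"
  unfolding rate_bound_def by (intro sum_nonneg exit_rate_nonneg)

lemma Labs_eq_jumps:
  "L f \<xi> = (\<Sum>\<zeta> | c (bulk N \<xi>) \<zeta> \<noteq> 0. c (bulk N \<xi>) \<zeta> * f (glue N \<zeta> \<xi>))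
     + (\<Sum>i\<in>Vbulk N. \<Sum>j\<in>Vabs N. r i j * real (\<xi> i) * f (move_particle \<xi> i j)) - exit_rate \<xi> * f \<xi>"
  unfolding Labs_def Lgen_def Hgen_move_particle exit_rate_def
  by (simp add: algebra_simps sum_subtractf sum.distrib sum_distrib_right sum_distrib_left)

lemma abs_Labs_le:
  assumes \<xi>: "\<xi> \<in> lvl K" and bound: "\<And>\<zeta>. \<zeta> \<in> lvl K \<Longrightarrow> \<bar>f \<zeta>\<bar> \<le> B"
  shows "\<bar>L f \<xi>\<bar> \<le> 2 * rate_bound K * B"
proof -
  let ?S = "{\<zeta>. c (bulk N \<xi>) \<zeta> \<noteq> 0}"
  have diff_le: "\<bar>f \<zeta> - f \<xi>\<bar> \<le> 2 * B" if "\<zeta> \<in> lvl K" for \<zeta>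
    using bound[OF that] bound[OF \<xi>] by linarith
  have "\<bar>Lgen c N f \<xi>\<bar> \<le> (\<Sum>\<zeta>\<in>?S. c (bulk N \<xi>) \<zeta> * (2 * B))"
    unfolding Lgen_def
    by (rule order_trans[OF sum_abs sum_mono])
      (use diff_le glue_in_level[OF \<xi>] in \<open>auto simp: abs_mult bulk_rate_nonneg mult_left_mono\<close>)
  moreover have "\<bar>Hgen r N f \<xi>\<bar> \<le> (\<Sum>i\<in>Vbulk N. \<Sum>j\<in>Vabs N. r i j * real (\<xi> i) * (2 * B))"
  proof (unfold Hgen_move_particle, rule order_trans[OF sum_abs sum_mono],
      rule order_trans[OF sum_abs sum_mono])
    fix i j assume "i \<in> Vbulk N" "j \<in> Vabs N"
    then show "\<bar>r i j * real (\<xi> i) * (f (move_particle \<xi> i j) - f \<xi>)\<bar> \<le> r i j * real (\<xi> i) * (2 * B)"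
      using diff_le[OF move_particle_in_level[OF \<xi>]]
      by (cases "\<xi> i = 0") (auto simp: abs_mult boundary_rate_nonneg mult_left_mono)
  qed
  ultimately have "\<bar>L f \<xi>\<bar> \<le> 2 * B * exit_rate \<xi>"
    unfolding Labs_def exit_rate_def by (simp add: sum_distrib_left algebra_simps)
  also have "\<dots> \<le> 2 * B * rate_bound K"
    using exit_rate_le_rate_bound[OF \<xi>] bound[OF \<xi>] by (simp add: mult_left_mono)
  finally show ?thesis by (simp add: algebra_simps)
qed

lemma abs_funpow_Labs_le:
  assumes "\<xi> \<in> lvl K" "\<And>\<zeta>. \<zeta> \<in> lvl K \<Longrightarrow> \<bar>f \<zeta>\<bar> \<le> B"
  shows "\<bar>(L ^^ k) f \<xi>\<bar> \<le> (2 * rate_bound K) ^ k * B"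
  using assms(1)
proof (induction k arbitrary: \<xi>)
  case (Suc k)
  have "\<bar>L ((L ^^ k) f) \<xi>\<bar> \<le> 2 * rate_bound K * ((2 * rate_bound K) ^ k * B)"
    by (rule abs_Labs_le[OF Suc.prems Suc.IH])
  then show ?case by (simp add: algebra_simps)
qed (simp add: assms(2))

lemma bounded_on_level: "\<exists>B. \<forall>\<zeta>\<in>lvl K. \<bar>F \<zeta>\<bar> \<le> (B :: real)"
  by (intro exI[of _ "\<Sum>\<zeta>\<in>lvl K. \<bar>F \<zeta>\<bar>"] ballI member_le_sum) (simp_all add: finite_level)

lemma summable_Expect_series:
  assumes "\<xi> \<in> \<Omega>"
  shows "summable (\<lambda>k. t ^ k / fact k * (L ^^ k) F \<xi>)"
proof -
  obtain B where "\<forall>\<zeta>\<in>lvl (num_particles N \<xi>). \<bar>F \<zeta>\<bar> \<le> B"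
    using bounded_on_level by blast
  then show ?thesis
    using abs_funpow_Labs_le[OF in_level_num_particles[OF assms]]
    by (intro summable_exp_series_if_geometric_bound) blast
qed

lemma Expect_linear:
  assumes "\<xi> \<in> \<Omega>"
  shows "E (\<lambda>\<zeta>. a * F \<zeta> + G \<zeta>) \<xi> t = a * E F \<xi> t + E G \<xi> t"
proof -
  have "E (\<lambda>\<zeta>. a * F \<zeta> + G \<zeta>) \<xi> t
      = (\<Sum>k. a * (t ^ k / fact k * (L ^^ k) F \<xi>) + t ^ k / fact k * (L ^^ k) G \<xi>)"
    unfolding Expect_def funpow_Labs_linear by (simp add: algebra_simps)
  also have "\<dots> = (\<Sum>k. a * (t ^ k / fact k * (L ^^ k) F \<xi>)) + (\<Sum>k. t ^ k / fact k * (L ^^ k) G \<xi>)"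
    using summable_Expect_series[OF assms] by (intro suminf_add[symmetric] summable_mult)
  also have "\<dots> = a * E F \<xi> t + E G \<xi> t"
    unfolding Expect_def using suminf_mult[OF summable_Expect_series[OF assms]] by simp
  finally show ?thesis .
qed

lemma Expect_cong_level:
  "\<xi> \<in> lvl K \<Longrightarrow> (\<And>\<zeta>. \<zeta> \<in> lvl K \<Longrightarrow> F \<zeta> = G \<zeta>) \<Longrightarrow> E F \<xi> t = E G \<xi> t"
  unfolding Expect_def using funpow_Labs_cong_level[of \<xi> K F G] by simp

lemma has_real_derivative_Expect:
  assumes "\<xi> \<in> \<Omega>"
  shows "((\<lambda>t. E F \<xi> t) has_real_derivative E (L F) \<xi> t) (at t)"
proof -
  define a where "a k = (L ^^ k) F \<xi> / fact k" for k
  have E_power_series: "E F \<xi> s = (\<Sum>k. a k * s ^ k)" for s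
    unfolding Expect_def a_def by (simp add: field_simps)
  have "diffs a k * t ^ k = t ^ k / fact k * (L ^^ k) (L F) \<xi>" for k
    unfolding diffs_def a_def
    by (simp add: funpow_Suc_right field_simps del: funpow.simps of_nat_Suc)
  then have E_diffs: "E (L F) \<xi> t = (\<Sum>k. diffs a k * t ^ k)"
    unfolding Expect_def by simp
  have "summable (\<lambda>k. a k * s ^ k)" for s
    using summable_Expect_series[OF assms, of s F] unfolding a_def by (simp add: field_simps)
  from termdiffs_strong_converges_everywhere[OF this, of t]
  show ?thesis unfolding E_power_series E_diffs .
qed

text \<open>Uniformization: on the level \<open>K\<close> the operator \<open>P = rate_bound K + L\<close> is positive, and
  \<open>exp (t L) = exp (- t rate_bound K) exp (t P)\<close>.\<close>
definition uniformized :: "nat \<Rightarrow> (config \<Rightarrow> real) \<Rightarrow> config \<Rightarrow> real" where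
  "uniformized K f = (\<lambda>\<zeta>. rate_bound K * f \<zeta> + L f \<zeta>)"

lemma uniformized_nonneg:
  assumes \<xi>: "\<xi> \<in> lvl K" and f: "\<And>\<zeta>. \<zeta> \<in> lvl K \<Longrightarrow> 0 \<le> f \<zeta>"
  shows "0 \<le> uniformized K f \<xi>"
proof -
  have "0 \<le> (\<Sum>\<zeta> | c (bulk N \<xi>) \<zeta> \<noteq> 0. c (bulk N \<xi>) \<zeta> * f (glue N \<zeta> \<xi>))"
    using glue_in_level[OF \<xi>] f by (intro sum_nonneg) (simp add: bulk_rate_nonneg)
  moreover have "0 \<le> (\<Sum>i\<in>Vbulk N. \<Sum>j\<in>Vabs N. r i j * real (\<xi> i) * f (move_particle \<xi> i j))"
  proof (intro sum_nonneg)
    fix i j assume "i \<in> Vbulk N" "j \<in> Vabs N"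
    then show "0 \<le> r i j * real (\<xi> i) * f (move_particle \<xi> i j)"
      using f[OF move_particle_in_level[OF \<xi>]] by (cases "\<xi> i = 0") (simp_all add: boundary_rate_nonneg)
  qed
  moreover have "0 \<le> (rate_bound K - exit_rate \<xi>) * f \<xi>"
    using exit_rate_le_rate_bound[OF \<xi>] f[OF \<xi>] by simp
  ultimately show ?thesis unfolding uniformized_def Labs_eq_jumps by (simp add: algebra_simps)
qed

lemma funpow_uniformized_nonneg:
  "\<xi> \<in> lvl K \<Longrightarrow> (\<And>\<zeta>. \<zeta> \<in> lvl K \<Longrightarrow> 0 \<le> f \<zeta>) \<Longrightarrow> 0 \<le> (uniformized K ^^ j) f \<xi>"
proof (induction j arbitrary: \<xi>)
  case (Suc j)
  then show ?case using uniformized_nonneg[of \<xi> K "(uniformized K ^^ j) f"] by simp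
qed simp

lemma abs_funpow_uniformized_le:
  assumes "\<xi> \<in> lvl K" "\<And>\<zeta>. \<zeta> \<in> lvl K \<Longrightarrow> \<bar>f \<zeta>\<bar> \<le> B"
  shows "\<bar>(uniformized K ^^ k) f \<xi>\<bar> \<le> (3 * rate_bound K) ^ k * B"
  using assms(1)
proof (induction k arbitrary: \<xi>)
  case (Suc k)
  let ?g = "(uniformized K ^^ k) f" and ?B = "(3 * rate_bound K) ^ k * B"
  have "\<bar>L ?g \<xi>\<bar> \<le> 2 * rate_bound K * ?B" by (rule abs_Labs_le[OF Suc.prems Suc.IH])
  moreover have "\<bar>rate_bound K * ?g \<xi>\<bar> \<le> rate_bound K * ?B"
    using Suc.IH[OF Suc.prems] rate_bound_nonneg by (simp add: abs_mult mult_left_mono)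
  ultimately have "\<bar>uniformized K ?g \<xi>\<bar> \<le> 3 * rate_bound K * ?B"
    unfolding uniformized_def by linarith
  then show ?case by (simp add: algebra_simps)
qed (simp add: assms(2))

lemma funpow_Labs_binomial:
  "(L ^^ k) F = (\<lambda>\<zeta>. \<Sum>j\<le>k. real (k choose j) * (- rate_bound K) ^ (k - j) * (uniformized K ^^ j) F \<zeta>)"
proof (induction k)
  case (Suc k)
  show ?case
  proof
    fix \<zeta>
    have "(L ^^ Suc k) F \<zeta>
        = L (\<lambda>\<zeta>. \<Sum>j\<le>k. real (k choose j) * (- rate_bound K) ^ (k - j) * (uniformized K ^^ j) F \<zeta>) \<zeta>"
      using Suc by simp
    also have "\<dots> = (\<Sum>j\<le>k. real (k choose j) * (- rate_bound K) ^ (k - j) * L ((uniformized K ^^ j) F) \<zeta>)"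
      by (simp add: Labs_sum Labs_cmult)
    also have "\<dots> = (\<Sum>j\<le>k. real (k choose j) * (- rate_bound K) ^ (k - j)
        * ((uniformized K ^^ Suc j) F \<zeta> + (- rate_bound K) * (uniformized K ^^ j) F \<zeta>))"
      by (simp add: uniformized_def)
    also have "\<dots> = (\<Sum>j\<le>Suc k. real (Suc k choose j) * (- rate_bound K) ^ (Suc k - j) * (uniformized K ^^ j) F \<zeta>)"
      by (rule binomial_sum_Suc)
    finally show "(L ^^ Suc k) F \<zeta>
        = (\<Sum>j\<le>Suc k. real (Suc k choose j) * (- rate_bound K) ^ (Suc k - j) * (uniformized K ^^ j) F \<zeta>)" .
  qed
qed simp

lemma Expect_nonneg:
  assumes \<xi>: "\<xi> \<in> lvl K" and F: "\<And>\<zeta>. \<zeta> \<in> lvl K \<Longrightarrow> 0 \<le> F \<zeta>" and t: "0 \<le> t"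
  shows "0 \<le> E F \<xi> t"
proof -
  define a where "a j = t ^ j / fact j * (uniformized K ^^ j) F \<xi>" for j
  define b where "b j = (- rate_bound K * t) ^ j / fact j" for j
  have a_nonneg: "0 \<le> a j" for j
    unfolding a_def using funpow_uniformized_nonneg[OF \<xi> F] t by simp
  obtain B where "\<forall>\<zeta>\<in>lvl K. \<bar>F \<zeta>\<bar> \<le> B" using bounded_on_level by blast
  then have "summable a"
    unfolding a_def using abs_funpow_uniformized_le[OF \<xi>]
    by (intro summable_exp_series_if_geometric_bound) blast
  then have summable_a: "summable (\<lambda>j. norm (a j))" using a_nonneg by simp
  have "summable (\<lambda>j. \<bar>rate_bound K * t\<bar> ^ j / fact j * 1)"
    by (rule summable_exp_series_if_geometric_bound[of _ 1 1]) simp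
  then have summable_b: "summable (\<lambda>j. norm (b j))" unfolding b_def by (simp add: power_abs)
  have "t ^ k / fact k * (L ^^ k) F \<xi> = (\<Sum>j\<le>k. a j * b (k - j))" for k
  proof -
    have "t ^ k / fact k * (L ^^ k) F \<xi>
        = (\<Sum>j\<le>k. t ^ k / fact k * (real (k choose j) * (- rate_bound K) ^ (k - j) * (uniformized K ^^ j) F \<xi>))"
      by (simp add: funpow_Labs_binomial[of k F K] sum_distrib_left)
    also have "\<dots> = (\<Sum>j\<le>k. a j * b (k - j))"
    proof (rule sum.cong)
      fix j assume "j \<in> {..k}"
      then have jk: "j \<le> k" by simp
      then have "t ^ k = t ^ j * t ^ (k - j)" by (simp add: power_add[symmetric])
      then show "t ^ k / fact k * (real (k choose j) * (- rate_bound K) ^ (k - j) * (uniformized K ^^ j) F \<xi>)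
          = a j * b (k - j)"
        unfolding a_def b_def binomial_fact[OF jk]
        by (simp add: power_mult_distrib[symmetric] field_simps)
    qed simp
    finally show ?thesis .
  qed
  then have "E F \<xi> t = (\<Sum>k. \<Sum>j\<le>k. a j * b (k - j))" unfolding Expect_def by simp
  also have "\<dots> = (\<Sum>j. a j) * (\<Sum>j. b j)" by (rule Cauchy_product[OF summable_a summable_b, symmetric])
  also have "(\<Sum>j. b j) = exp (- rate_bound K * t)"
    unfolding b_def exp_def by (simp add: divide_inverse_commute)
  finally show ?thesis
    using \<open>summable a\<close> a_nonneg by (simp add: suminf_nonneg)
qed

section \<open>Duality and absorption\<close>

lemma Aop_cong_Omega:
  assumes "\<eta> \<in> \<Omega>" "\<And>\<zeta>. \<zeta> \<in> \<Omega> \<Longrightarrow> f \<zeta> = g \<zeta>"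
  shows "A f \<eta> = A g \<eta>"
  unfolding Aop_def using assms(2)[OF remove_particle_in_Omega[OF assms(1)]] by simp

lemma funpow_Labs_Aop_commute: "\<eta> \<in> \<Omega> \<Longrightarrow> (L ^^ k) (A G) \<eta> = A ((L ^^ k) G) \<eta>"
proof (induction k arbitrary: \<eta>)
  case (Suc k)
  have "L ((L ^^ k) (A G)) \<eta> = L (A ((L ^^ k) G)) \<eta>"
    using Suc by (intro Labs_cong_level[OF in_level_num_particles]) (simp_all add: level_def)
  also have "\<dots> = A (L ((L ^^ k) G)) \<eta>" by (rule Labs_Aop_commute[OF Suc.prems])
  finally show ?case by simp
qed simp

lemma Expect_Aop:
  assumes "\<eta> \<in> \<Omega>"
  shows "E (A G) \<eta> t = A (\<lambda>\<xi>. E G \<xi> t) \<eta>"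
proof -
  have "E (A G) \<eta> t
      = (\<Sum>k. \<Sum>y\<in>Vstar N. real (\<eta> y) * (t ^ k / fact k * (L ^^ k) G (\<eta>(y := \<eta> y - 1))))"
    unfolding Expect_def using funpow_Labs_Aop_commute[OF assms]
    by (simp add: Aop_def sum_distrib_left algebra_simps)
  also have "\<dots> = (\<Sum>y\<in>Vstar N. \<Sum>k. real (\<eta> y) * (t ^ k / fact k * (L ^^ k) G (\<eta>(y := \<eta> y - 1))))"
    by (intro suminf_sum summable_mult summable_Expect_series remove_particle_in_Omega assms)
  also have "\<dots> = A (\<lambda>\<xi>. E G \<xi> t) \<eta>"
    unfolding Aop_def Expect_def
    by (intro sum.cong refl suminf_mult summable_Expect_series remove_particle_in_Omega assms)
  finally show ?thesis .
qed

lemma Expect_funpow_Aop: "\<eta> \<in> \<Omega> \<Longrightarrow> E ((A ^^ k) G) \<eta> t = (A ^^ k) (\<lambda>\<xi>. E G \<xi> t) \<eta>"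
proof (induction k arbitrary: \<eta>)
  case (Suc k)
  have "E (A ((A ^^ k) G)) \<eta> t = A (\<lambda>\<xi>. E ((A ^^ k) G) \<xi> t) \<eta>" by (rule Expect_Aop[OF Suc.prems])
  also have "\<dots> = A ((A ^^ k) (\<lambda>\<xi>. E G \<xi> t)) \<eta>" by (rule Aop_cong_Omega[OF Suc.prems Suc.IH])
  finally show ?case by simp
qed simp

lemma Expect_tendsto_Lim_if_Labs_nonneg:
  assumes \<eta>: "\<eta> \<in> lvl K"
    and g_range: "\<And>\<zeta>. \<zeta> \<in> lvl K \<Longrightarrow> 0 \<le> g \<zeta> \<and> g \<zeta> \<le> 1"
    and Labs_g: "\<And>\<zeta>. \<zeta> \<in> lvl K \<Longrightarrow> 0 \<le> L g \<zeta>"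
  shows "((\<lambda>t. E g \<eta> t) \<longlongrightarrow> Lim at_top (\<lambda>t. E g \<eta> t)) at_top"
proof -
  have \<eta>_Omega: "\<eta> \<in> \<Omega>" using \<eta> by (simp add: level_def)
  have "E g \<eta> a \<le> E g \<eta> b" if "0 \<le> a" "a \<le> b" for a b
  proof (rule DERIV_nonneg_imp_increasing_open[OF that(2)])
    fix s assume "a < s" "s < b"
    then show "\<exists>y. ((\<lambda>t. E g \<eta> t) has_real_derivative y) (at s) \<and> 0 \<le> y"
      using has_real_derivative_Expect[OF \<eta>_Omega] Expect_nonneg[OF \<eta> Labs_g] that by fastforce
  next
    show "continuous_on {a..b} (\<lambda>t. E g \<eta> t)"
      by (rule DERIV_continuous_on) (rule has_field_derivative_at_within[OF has_real_derivative_Expect[OF \<eta>_Omega]])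
  qed
  moreover have "E g \<eta> t \<le> 1" if "0 \<le> t" for t
  proof -
    have "0 \<le> E (\<lambda>\<zeta>. (-1) * g \<zeta> + 1) \<eta> t"
      using g_range by (intro Expect_nonneg[OF \<eta> _ that]) simp
    then show ?thesis unfolding Expect_linear[OF \<eta>_Omega] Expect_const by simp
  qed
  ultimately have "((\<lambda>t. E g \<eta> t) \<longlongrightarrow> (SUP t\<in>{0..}. E g \<eta> t)) at_top"
    by (rule tendsto_SUP_at_top_if_mono_bounded)
  moreover from this have "Lim at_top (\<lambda>t. E g \<eta> t) = (SUP t\<in>{0..}. E g \<eta> t)"
    by (rule tendsto_Lim[OF trivial_limit_at_top_linorder])
  ultimately show ?thesis by simp
qed

text \<open>Particles at the absorbing site \<open>0\<close> never leave it, so with \<open>m\<close> particles in total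
  the event \<open>\<eta>\<^sub>0 = m\<close> cannot be left.\<close>
lemma Labs_indicator_absorbed_nonneg:
  assumes "\<zeta> \<in> lvl m"
  shows "0 \<le> L (\<lambda>\<xi>. if \<xi> 0 = m then 1 else 0) \<zeta>"
proof -
  have "Lgen c N (\<lambda>\<xi>. if \<xi> 0 = m then 1 else 0) \<zeta> = 0"
    unfolding Lgen_def by (rule sum.neutral) (simp add: glue_def Vbulk_def)
  moreover have "0 \<le> Hgen r N (\<lambda>\<xi>. if \<xi> 0 = m then 1 else 0) \<zeta>"
    unfolding Hgen_move_particle
  proof (intro sum_nonneg)
    fix i j assume i: "i \<in> Vbulk N"
    have "\<zeta> 0 + \<zeta> i = (\<Sum>x\<in>{0, i}. \<zeta> x)" using i by (simp add: Vbulk_def)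
    also have "\<dots> \<le> num_particles N \<zeta>"
      unfolding num_particles_def by (rule sum_mono2) (use i in \<open>auto simp: Vbulk_def Vstar_def\<close>)
    also have "\<dots> = m" using assms by (simp add: level_def)
    finally have "0 < \<zeta> i \<Longrightarrow> \<zeta> 0 \<noteq> m" by linarith
    then show "0 \<le> r i j * real (\<zeta> i) * ((if move_particle \<zeta> i j 0 = m then 1 else 0)
        - (if \<zeta> 0 = m then 1 else 0))"
      by (cases "\<zeta> i = 0") (simp_all add: boundary_rate_nonneg)
  qed
  ultimately show ?thesis unfolding Labs_def by simp
qed

lemma phi_nths_in_level:
  assumes xs: "phi xs \<in> \<Omega>" and I: "I \<subseteq> {..<length xs}"
  shows "phi (nths xs I) \<in> lvl (card I)"
proof -
  have le: "phi (nths xs I) x \<le> phi xs x" for x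
  proof -
    have "phi xs x = phi (nths xs {..<length xs}) x" by (simp add: nths_all)
    then show ?thesis unfolding phi_nths_apply using I by (auto intro: card_mono)
  qed
  have "phi (nths xs I) \<in> \<Omega>"
    unfolding Omega_def
  proof (intro CollectI conjI allI ballI impI)
    fix x assume "x \<notin> Vstar N"
    then show "phi (nths xs I) x = 0" using le[of x] xs by (simp add: Omega_def)
  next
    fix x assume "x \<in> Vbulk N"
    then show "phi (nths xs I) x \<in> Lam"
      using le[of x] xs Lam_downward_closed by (auto simp: Omega_def)
  qed
  moreover have "{i. i < length xs \<and> i \<in> I} = I" using I by auto
  then have "length (nths xs I) = card I" by (simp add: length_nths)
  ultimately show ?thesis
    using num_particles_phi[OF order_trans[OF set_nths_subset phi_in_Omega_imp_subset[OF xs]]]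
    unfolding level_def by simp
qed

lemma Expect_binomial_eq_sum:
  assumes "phi xs \<in> \<Omega>" "m \<le> length xs"
  shows "E (\<lambda>\<xi>. real (\<xi> 0 choose m)) (phi xs) t
       = (\<Sum>I | I \<subseteq> {..<length xs} \<and> card I = m. E (\<lambda>\<xi>. if \<xi> 0 = m then 1 else 0) (phi (nths xs I)) t)"
proof -
  let ?n = "length xs" and ?g = "\<lambda>\<xi>. if \<xi> 0 = m then 1 else 0 :: real"
  have xs: "set xs \<subseteq> Vstar N" and n: "num_particles N (phi xs) = ?n"
    using assms(1) phi_in_Omega_imp_subset num_particles_phi by blast+
  have "fact (?n - m) * E (\<lambda>\<xi>. real (\<xi> 0 choose m)) (phi xs) t
      = E (\<lambda>\<xi>. fact (?n - m) * real (\<xi> 0 choose m) + 0) (phi xs) t"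
    using Expect_linear[OF assms(1), of "fact (?n - m)" "\<lambda>\<xi>. real (\<xi> 0 choose m)" "\<lambda>_. 0"]
    by (simp add: Expect_const)
  also have "\<dots> = E ((A ^^ (?n - m)) ?g) (phi xs) t"
    using in_level_num_particles[OF assms(1)] assms(2) n
    by (intro Expect_cong_level) (auto simp: level_def funpow_Aop_indicator_eq_binomial)
  also have "\<dots> = (A ^^ (?n - m)) (\<lambda>\<xi>. E ?g \<xi> t) (phi (nths xs {..<?n}))"
    using Expect_funpow_Aop[OF assms(1)] by (simp add: nths_all)
  also have "\<dots> = fact (?n - m) * (\<Sum>I | I \<subseteq> {..<?n} \<and> card I = m. E ?g (phi (nths xs I)) t)"
    using funpow_Aop_phi_nths[OF xs, of "{..<?n}" "?n - m"] assms(2) by simp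
  finally show ?thesis by simp
qed

end

theorem proposition5p7:
  fixes N n m :: nat and Lam :: "nat set" and c :: "config \<Rightarrow> config \<Rightarrow> real"
    and r :: "nat \<Rightarrow> nat \<Rightarrow> real" and xs :: "nat list"
  assumes "consistent_abs_process N Lam c r"
    and "length xs = n" and "set xs \<subseteq> Vstar N" and "phi xs \<in> Omega N Lam"
    and "m \<in> {1..n-1}"
  shows "Lim at_top (\<lambda>t. Expect c r N (\<lambda>\<xi>. real (\<xi> 0 choose m)) (phi xs) t)
       = (\<Sum>I\<in>{I. I \<subseteq> {..<n} \<and> card I = m}.
            Lim at_top (\<lambda>t. Prob c r N (\<lambda>\<xi>. \<xi> 0 = m) (phi (nths xs I)) t))"
proof -
  interpret consistent_process N Lam c r by unfold_locales (rule assms(1))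
  let ?S = "{I. I \<subseteq> {..<n} \<and> card I = m}"
  let ?u = "\<lambda>I t. E (\<lambda>\<xi>. if \<xi> 0 = m then 1 else 0) (phi (nths xs I)) t"
  \<comment> \<open>only \<open>m \<le> n\<close> is needed, and \<open>set xs \<subseteq> Vstar N\<close> follows from \<open>phi xs \<in> Omega N Lam\<close>\<close>
  have "m \<le> n" using assms(5) by auto
  have "(?u I \<longlongrightarrow> Lim at_top (?u I)) at_top" if "I \<in> ?S" for I
  proof (rule Expect_tendsto_Lim_if_Labs_nonneg)
    show "phi (nths xs I) \<in> lvl m" using that assms(2) phi_nths_in_level[OF assms(4), of I] by auto
  qed (simp_all add: Labs_indicator_absorbed_nonneg)
  then have "((\<lambda>t. \<Sum>I\<in>?S. ?u I t) \<longlongrightarrow> (\<Sum>I\<in>?S. Lim at_top (?u I))) at_top"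
    by (rule tendsto_sum)
  then have "((\<lambda>t. E (\<lambda>\<xi>. real (\<xi> 0 choose m)) (phi xs) t) \<longlongrightarrow> (\<Sum>I\<in>?S. Lim at_top (?u I))) at_top"
    using Expect_binomial_eq_sum[OF assms(4)] \<open>m \<le> n\<close> assms(2) by simp
  then show ?thesis unfolding Prob_def by (rule tendsto_Lim[OF trivial_limit_at_top_linorder])
qed

end
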